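(* In the multi-parameter setting described in the context, for every Kraus representation $\{E_k(\theta)\}$ of the channel and every POVM $\{M_m\}$, $F_M(\theta)\le C_E(\theta)$ as $m\times m$ real symmetric matrices.
   Context: A multi-parameter quantum channel on density matrices on $\mathbb{C}^d$ is $\rho_0\mapsto\sum_kE_k(\theta)\rho_0E_k(\theta)^\dagger$ with $\theta=(\theta^1,\dots,\theta^m)\in\mathbb{R}^m$, Kraus operators differentiable, $\sum_kE_k^\dagger E_k=I$. The input is a fixed pure state $\rho_0=|\psi_0\rangle\langle\psi_0|$ with output $\rho_{out}(\theta)$. Write $X^{(j)}=\partial X/\partial\theta^j$. $C_E(\theta)_{jk}=4\sum_l\mathrm{Re}\,\mathrm{tr}\{E_l^{(j)}\rho_0E_l^{(k)\dagger}\}$. For a POVM $\{M_m\}$ (Hermitian, nonnegative, summing to $I$) with $p(m;\theta)=\mathrm{tr}\{\rho_{out}(\theta)M_m\}$, the Fisher information matrix is $F_M(\theta)_{jk}=\sum_m p(m;\theta)^{-1}\frac{\partial p(m;\theta)}{\partial\theta^j}\frac{\partial p(m;\theta)}{\partial\theta^k}$. *)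

theory Defs
  imports "HOL-Analysis.Analysis"
begin

text \<open>Complex d x d matrices are represented as complex^'d^'d (d = CARD('d)),
parameter vectors theta as real^'p (m = CARD('p)).\<close>

definition adj :: "complex^'d^'d \<Rightarrow> complex^'d^'d" where
  "adj A = (\<chi> i j. cnj (A $ j $ i))"

definition mtrace :: "complex^'d^'d \<Rightarrow> complex" where
  "mtrace A = (\<Sum>i\<in>UNIV. A $ i $ i)"

definition hermitian :: "complex^'d^'d \<Rightarrow> bool" where
  "hermitian A \<longleftrightarrow> adj A = A"

definition nonneg_op :: "complex^'d^'d \<Rightarrow> bool" where
  "nonneg_op A \<longleftrightarrow> hermitian A \<and>
     (\<forall>v::complex^'d. 0 \<le> Re (\<Sum>i\<in>UNIV. cnj (v $ i) * (A *v v) $ i))"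

definition ket_bra :: "complex^'d \<Rightarrow> complex^'d^'d" where
  "ket_bra \<psi> = (\<chi> i j. \<psi> $ i * cnj (\<psi> $ j))"

definition pderiv_j :: "(real^'p \<Rightarrow> 'b::real_normed_vector) \<Rightarrow> real^'p \<Rightarrow> 'p \<Rightarrow> 'b" where
  "pderiv_j f \<theta> j = frechet_derivative f (at \<theta>) (axis j 1)"

definition rho_out :: "'k set \<Rightarrow> ('k \<Rightarrow> real^'p \<Rightarrow> complex^'d^'d) \<Rightarrow> complex^'d^'d
     \<Rightarrow> real^'p \<Rightarrow> complex^'d^'d" where
  "rho_out K E \<rho>0 \<theta> = (\<Sum>k\<in>K. E k \<theta> ** \<rho>0 ** adj (E k \<theta>))"

definition prob_out :: "'k set \<Rightarrow> ('k \<Rightarrow> real^'p \<Rightarrow> complex^'d^'d) \<Rightarrow> complex^'d^'d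
     \<Rightarrow> complex^'d^'d \<Rightarrow> real^'p \<Rightarrow> real" where
  "prob_out K E \<rho>0 Mm \<theta> = Re (mtrace (rho_out K E \<rho>0 \<theta> ** Mm))"

text \<open>Fisher information matrix F_M(theta). (Outcomes with p = 0 contribute 0,
  since inverse 0 = 0 in Isabelle.)\<close>
definition fisher :: "'k set \<Rightarrow> ('k \<Rightarrow> real^'p \<Rightarrow> complex^'d^'d) \<Rightarrow> complex^'d^'d
     \<Rightarrow> 'o set \<Rightarrow> ('o \<Rightarrow> complex^'d^'d) \<Rightarrow> real^'p \<Rightarrow> real^'p^'p" where
  "fisher K E \<rho>0 \<Omega> M \<theta> = (\<chi> j k. \<Sum>m\<in>\<Omega>.
      inverse (prob_out K E \<rho>0 (M m) \<theta>)
      * pderiv_j (prob_out K E \<rho>0 (M m)) \<theta> j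
      * pderiv_j (prob_out K E \<rho>0 (M m)) \<theta> k)"

definition C_E :: "'k set \<Rightarrow> ('k \<Rightarrow> real^'p \<Rightarrow> complex^'d^'d) \<Rightarrow> complex^'d^'d
     \<Rightarrow> real^'p \<Rightarrow> real^'p^'p" where
  "C_E K E \<rho>0 \<theta> = (\<chi> j k. 4 * (\<Sum>l\<in>K.
      Re (mtrace (pderiv_j (E l) \<theta> j ** \<rho>0 ** adj (pderiv_j (E l) \<theta> k)))))"

definition loewner_le :: "real^'p^'p \<Rightarrow> real^'p^'p \<Rightarrow> bool" where
  "loewner_le A B \<longleftrightarrow> (\<forall>x::real^'p. 0 \<le> x \<bullet> ((B - A) *v x))"

end

theory Submission imports Defs begin

(* With a_k = E_k(theta) psi and b_k = sum_j x_j E_k^(j) psi one has p(m) = sum_k <a_k, M_m a_k>,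
   the derivative of p(m) along x is D_m = sum_k 2 Re <a_k, M_m b_k>, and x^T C_E x = 4 sum_k |b_k|^2.
   As t |-> sum_k <a_k + t b_k, M_m (a_k + t b_k)> is a nonnegative quadratic, its discriminant gives
   D_m^2 <= 4 p(m) sum_k <b_k, M_m b_k>; dividing by p(m) and summing over m with sum_m M_m = I
   gives x^T F_M x <= x^T C_E x. *)

lemma quadratic_nonneg_imp_discrim_le:
  fixes p D Q :: real
  assumes nonneg: "\<And>t. 0 \<le> p + t * D + t\<^sup>2 * Q" and "0 \<le> Q"
  shows "D\<^sup>2 \<le> 4 * p * Q"
proof (cases "Q = 0")
  case True
  have "D = 0"
  proof (rule ccontr)
    assume "D \<noteq> 0"
    with nonneg[of "- (\<bar>p\<bar> + 1) / D"] True show False by simp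
  qed
  with True show ?thesis by simp
next
  case False
  with \<open>0 \<le> Q\<close> have "Q > 0" by simp
  have "0 \<le> p + (- D / (2 * Q)) * D + (- D / (2 * Q))\<^sup>2 * Q" by (rule nonneg)
  also have "\<dots> = p - D\<^sup>2 / (4 * Q)" using \<open>Q > 0\<close> by (simp add: field_simps power2_eq_square)
  finally show ?thesis using \<open>Q > 0\<close> by (simp add: field_simps)
qed

lemma inverse_mult_sum_cross_terms_sq_le:
  fixes f :: "'a::real_inner \<Rightarrow> 'a" and a b :: "'k \<Rightarrow> 'a"
  assumes "linear f" and f_nonneg: "\<And>v. 0 \<le> v \<bullet> f v"
  shows "inverse (\<Sum>k\<in>K. a k \<bullet> f (a k)) * (\<Sum>k\<in>K. a k \<bullet> f (b k) + b k \<bullet> f (a k))\<^sup>2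
           \<le> 4 * (\<Sum>k\<in>K. b k \<bullet> f (b k))"
proof -
  define p where "p = (\<Sum>k\<in>K. a k \<bullet> f (a k))"
  define D where "D = (\<Sum>k\<in>K. a k \<bullet> f (b k) + b k \<bullet> f (a k))"
  define Q where "Q = (\<Sum>k\<in>K. b k \<bullet> f (b k))"
  have "p \<ge> 0" "Q \<ge> 0" unfolding p_def Q_def by (simp_all add: sum_nonneg f_nonneg)
  have "0 \<le> p + t * D + t\<^sup>2 * Q" for t
  proof -
    have "0 \<le> (\<Sum>k\<in>K. (a k + t *\<^sub>R b k) \<bullet> f (a k + t *\<^sub>R b k))"
      by (simp add: sum_nonneg f_nonneg)
    also have "\<dots> = p + t * D + t\<^sup>2 * Q"
      unfolding p_def D_def Q_def
      by (simp add: linear_add[OF \<open>linear f\<close>] linear_scale[OF \<open>linear f\<close>] inner_add_left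
          inner_add_right sum.distrib sum_distrib_left power2_eq_square algebra_simps)
    finally show ?thesis .
  qed
  then have "D\<^sup>2 \<le> 4 * p * Q" using \<open>Q \<ge> 0\<close> by (rule quadratic_nonneg_imp_discrim_le)
  with \<open>p \<ge> 0\<close> \<open>Q \<ge> 0\<close> have "inverse p * D\<^sup>2 \<le> 4 * Q"
    by (cases "p = 0") (simp_all add: field_simps mult.commute)
  then show ?thesis unfolding p_def D_def Q_def .
qed

(* On complex^'d the library inner product u \<bullet> v is the real part of the Hermitian one. *)

lemma Re_mtrace_ket_bra:
  "Re (mtrace (A ** ket_bra \<psi> ** adj B ** M)) = (B *v \<psi>) \<bullet> (M *v (A *v \<psi>))"
proof -
  have "mtrace (A ** ket_bra \<psi> ** adj B ** M) =
    (\<Sum>i\<in>UNIV. \<Sum>l\<in>UNIV. \<Sum>k\<in>UNIV. \<Sum>j\<in>UNIV. A$i$j * \<psi>$j * cnj (\<psi>$k) * cnj (B$l$k) * M$l$i)"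
    by (simp add: mtrace_def matrix_matrix_mult_def ket_bra_def adj_def sum_distrib_left
        sum_distrib_right mult.assoc)
  also have "\<dots> = (\<Sum>l\<in>UNIV. \<Sum>i\<in>UNIV. \<Sum>j\<in>UNIV. \<Sum>k\<in>UNIV.
      A$i$j * \<psi>$j * cnj (\<psi>$k) * cnj (B$l$k) * M$l$i)"
    by (subst sum.swap) (intro sum.cong refl sum.swap)
  also have "\<dots> = (\<Sum>l\<in>UNIV. cnj ((B *v \<psi>) $ l) * (M *v (A *v \<psi>)) $ l)"
    by (simp add: matrix_vector_mult_def sum_distrib_left sum_distrib_right mult_ac)
  finally show ?thesis by (simp add: inner_vec_def inner_complex_def)
qed

lemma mtrace_sum_mult: "mtrace ((\<Sum>k\<in>K. X k) ** M) = (\<Sum>k\<in>K. mtrace (X k ** M))"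
proof -
  have "mtrace ((\<Sum>k\<in>K. X k) ** M) = (\<Sum>i\<in>UNIV. \<Sum>k\<in>K. \<Sum>j\<in>UNIV. X k $ i $ j * M $ j $ i)"
    by (simp add: mtrace_def matrix_matrix_mult_def sum_distrib_right) (intro sum.cong refl sum.swap)
  also have "\<dots> = (\<Sum>k\<in>K. mtrace (X k ** M))"
    by (subst sum.swap) (simp add: mtrace_def matrix_matrix_mult_def)
  finally show ?thesis .
qed

lemma prob_out_ket_bra:
  "prob_out K E (ket_bra \<psi>) M t = (\<Sum>k\<in>K. (E k t *v \<psi>) \<bullet> (M *v (E k t *v \<psi>)))"
  by (simp add: prob_out_def rho_out_def mtrace_sum_mult Re_mtrace_ket_bra)

lemma bounded_linear_matrix_vector_mult_left: "bounded_linear (\<lambda>A::complex^'n^'m. A *v v)"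
  unfolding linear_conv_bounded_linear[symmetric]
  by (intro linearI)
    (simp_all add: vec_eq_iff matrix_vector_mult_def scaleR_sum_right distrib_right sum.distrib)

lemma has_derivative_prob_out_ket_bra:
  assumes "\<And>k. k \<in> K \<Longrightarrow> (E k has_derivative E' k) (at \<theta>)"
  shows "(prob_out K E (ket_bra \<psi>) M has_derivative
     (\<lambda>x. \<Sum>k\<in>K. (E k \<theta> *v \<psi>) \<bullet> (M *v (E' k x *v \<psi>)) + (E' k x *v \<psi>) \<bullet> (M *v (E k \<theta> *v \<psi>))))
     (at \<theta>)"
  unfolding prob_out_ket_bra[abs_def]
proof (rule has_derivative_sum)
  fix k assume "k \<in> K"
  have "((\<lambda>t. E k t *v \<psi>) has_derivative (\<lambda>x. E' k x *v \<psi>)) (at \<theta>)"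
    by (rule bounded_linear.has_derivative[OF bounded_linear_matrix_vector_mult_left assms[OF \<open>k \<in> K\<close>]])
  moreover from this have "((\<lambda>t. M *v (E k t *v \<psi>)) has_derivative (\<lambda>x. M *v (E' k x *v \<psi>))) (at \<theta>)"
    by (rule bounded_linear.has_derivative[OF matrix_vector_mul_bounded_linear])
  ultimately show "((\<lambda>t. (E k t *v \<psi>) \<bullet> (M *v (E k t *v \<psi>))) has_derivative
     (\<lambda>x. (E k \<theta> *v \<psi>) \<bullet> (M *v (E' k x *v \<psi>)) + (E' k x *v \<psi>) \<bullet> (M *v (E k \<theta> *v \<psi>)))) (at \<theta>)"
    by (rule has_derivative_inner)
qed

lemma sum_scaleR_pderiv_j:
  fixes f :: "real^'p \<Rightarrow> 'b::real_normed_vector"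
  assumes "(f has_derivative f') (at \<theta>)"
  shows "(\<Sum>j\<in>UNIV. x $ j *\<^sub>R pderiv_j f \<theta> j) = f' x"
proof -
  have "linear f'" using assms by (rule has_derivative_linear)
  have "f' x = f' (\<Sum>j\<in>UNIV. x $ j *\<^sub>R axis j 1)"
    using basis_expansion[of x] by (simp add: scalar_mult_eq_scaleR)
  also have "\<dots> = (\<Sum>j\<in>UNIV. x $ j *\<^sub>R f' (axis j 1))"
    by (simp add: linear_sum[OF \<open>linear f'\<close>] linear_scale[OF \<open>linear f'\<close>])
  finally show ?thesis
    using frechet_derivative_at[OF assms] by (simp add: pderiv_j_def)
qed

lemma inner_gram_matrix_vector_mult:
  fixes v :: "'m \<Rightarrow> 'p::finite \<Rightarrow> 'a::real_inner"
  shows "x \<bullet> ((\<chi> j k. \<Sum>m\<in>S. w m * (v m j \<bullet> v m k)) *v x)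
           = (\<Sum>m\<in>S. w m * (norm (\<Sum>j\<in>UNIV. x $ j *\<^sub>R v m j))\<^sup>2)"
proof -
  have "x \<bullet> ((\<chi> j k. \<Sum>m\<in>S. w m * (v m j \<bullet> v m k)) *v x)
      = (\<Sum>j\<in>UNIV. \<Sum>k\<in>UNIV. \<Sum>m\<in>S. w m * (x $ j * x $ k * (v m j \<bullet> v m k)))"
    by (simp add: inner_vec_def matrix_vector_mult_def sum_distrib_left sum_distrib_right mult_ac)
  also have "\<dots> = (\<Sum>m\<in>S. \<Sum>j\<in>UNIV. \<Sum>k\<in>UNIV. w m * (x $ j * x $ k * (v m j \<bullet> v m k)))"
    by (subst sum.swap) (subst (2) sum.swap, intro sum.cong refl sum.swap)
  also have "\<dots> = (\<Sum>m\<in>S. w m * (norm (\<Sum>j\<in>UNIV. x $ j *\<^sub>R v m j))\<^sup>2)"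
    by (simp add: power2_norm_eq_inner inner_sum_left inner_sum_right sum_distrib_left mult_ac inner_commute)
  finally show ?thesis .
qed

lemma inner_fisher_matrix_vector_mult:
  assumes "\<And>m. m \<in> \<Omega> \<Longrightarrow> (prob_out K E \<rho>0 (M m) has_derivative P' m) (at \<theta>)"
  shows "x \<bullet> (fisher K E \<rho>0 \<Omega> M \<theta> *v x)
           = (\<Sum>m\<in>\<Omega>. inverse (prob_out K E \<rho>0 (M m) \<theta>) * (P' m x)\<^sup>2)"
proof -
  have "fisher K E \<rho>0 \<Omega> M \<theta> = (\<chi> j k. \<Sum>m\<in>\<Omega>. inverse (prob_out K E \<rho>0 (M m) \<theta>)
      * (pderiv_j (prob_out K E \<rho>0 (M m)) \<theta> j \<bullet> pderiv_j (prob_out K E \<rho>0 (M m)) \<theta> k))"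
    by (simp add: fisher_def mult.assoc)
  then have "x \<bullet> (fisher K E \<rho>0 \<Omega> M \<theta> *v x) = (\<Sum>m\<in>\<Omega>. inverse (prob_out K E \<rho>0 (M m) \<theta>)
      * (norm (\<Sum>j\<in>UNIV. x $ j *\<^sub>R pderiv_j (prob_out K E \<rho>0 (M m)) \<theta> j))\<^sup>2)"
    by (simp only: inner_gram_matrix_vector_mult)
  also have "\<dots> = (\<Sum>m\<in>\<Omega>. inverse (prob_out K E \<rho>0 (M m) \<theta>) * (P' m x)\<^sup>2)"
    by (intro sum.cong refl) (simp only: sum_scaleR_pderiv_j[OF assms] real_norm_def power2_abs)
  finally show ?thesis .
qed

lemma inner_C_E_ket_bra:
  assumes "\<And>k. k \<in> K \<Longrightarrow> (E k has_derivative E' k) (at \<theta>)"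
  shows "x \<bullet> (C_E K E (ket_bra \<psi>) \<theta> *v x) = 4 * (\<Sum>k\<in>K. (norm (E' k x *v \<psi>))\<^sup>2)"
proof -
  define u where "u k j = pderiv_j (E k) \<theta> j *v \<psi>" for k j
  have "Re (mtrace (A ** ket_bra \<psi> ** adj B)) = (A *v \<psi>) \<bullet> (B *v \<psi>)" for A B
    using Re_mtrace_ket_bra[of A \<psi> B "mat 1"] by (simp add: inner_commute)
  then have "C_E K E (ket_bra \<psi>) \<theta> = (\<chi> j k. \<Sum>l\<in>K. 4 * (u l j \<bullet> u l k))"
    by (simp add: C_E_def u_def sum_distrib_left)
  moreover have "(\<Sum>j\<in>UNIV. x $ j *\<^sub>R u k j) = E' k x *v \<psi>" if "k \<in> K" for k
    using sum_scaleR_pderiv_j[OF assms[OF that], of x, symmetric]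
    by (simp add: u_def vec_eq_iff matrix_vector_mult_def scaleR_sum_right sum_distrib_right
        sum_component)
      (subst sum.swap, simp add: mult.assoc)
  ultimately show ?thesis
    by (simp add: inner_gram_matrix_vector_mult sum_distrib_left)
qed

lemma nonneg_op_inner_nonneg: "nonneg_op M \<Longrightarrow> 0 \<le> v \<bullet> (M *v v)"
  by (simp add: nonneg_op_def inner_vec_def inner_complex_def)

lemma sum_inner_matrix_vector_mult:
  "(\<Sum>m\<in>\<Omega>. v \<bullet> (M m *v v)) = v \<bullet> ((\<Sum>m\<in>\<Omega>. M m) *v v)"
proof -
  have "(\<Sum>m\<in>\<Omega>. M m) *v v = (\<Sum>m\<in>\<Omega>. M m *v v)"
    by (simp add: vec_eq_iff matrix_vector_mult_def sum_distrib_right sum_component) (intro allI sum.swap)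
  then show ?thesis by (simp add: inner_sum_right)
qed

theorem lemma14:
  fixes K :: "'k set" and E :: "'k \<Rightarrow> real^'p \<Rightarrow> complex^'d^'d"
    and \<psi> :: "complex^'d" and \<Omega> :: "'o set" and M :: "'o \<Rightarrow> complex^'d^'d"
    and \<theta> :: "real^'p"
  assumes "finite K"
    and "\<forall>k\<in>K. \<forall>t. E k differentiable (at t)"
    and "\<forall>t. (\<Sum>k\<in>K. adj (E k t) ** E k t) = mat 1"
    and "norm \<psi> = 1"
    and "finite \<Omega>"
    and "\<forall>m\<in>\<Omega>. nonneg_op (M m)"
    and "(\<Sum>m\<in>\<Omega>. M m) = mat 1"
  shows "loewner_le (fisher K E (ket_bra \<psi>) \<Omega> M \<theta>) (C_E K E (ket_bra \<psi>) \<theta>)"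
  unfolding loewner_le_def
proof
  fix x :: "real^'p"
  define E' where "E' k = frechet_derivative (E k) (at \<theta>)" for k
  define a where "a k = E k \<theta> *v \<psi>" for k
  define b where "b k = E' k x *v \<psi>" for k
  have E': "(E k has_derivative E' k) (at \<theta>)" if "k \<in> K" for k
    using assms(2) that by (simp add: E'_def frechet_derivative_works[symmetric])
  have "x \<bullet> (fisher K E (ket_bra \<psi>) \<Omega> M \<theta> *v x)
      = (\<Sum>m\<in>\<Omega>. inverse (\<Sum>k\<in>K. a k \<bullet> (M m *v a k))
                  * (\<Sum>k\<in>K. a k \<bullet> (M m *v b k) + b k \<bullet> (M m *v a k))\<^sup>2)"
    by (simp add: inner_fisher_matrix_vector_mult[OF has_derivative_prob_out_ket_bra[OF E']]
        prob_out_ket_bra a_def b_def)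
  also have "\<dots> \<le> (\<Sum>m\<in>\<Omega>. 4 * (\<Sum>k\<in>K. b k \<bullet> (M m *v b k)))"
    using assms(6) by (intro sum_mono inverse_mult_sum_cross_terms_sq_le)
      (simp_all add: nonneg_op_inner_nonneg)
  also have "\<dots> = 4 * (\<Sum>k\<in>K. (norm (b k))\<^sup>2)"
    by (simp add: sum_distrib_left[symmetric], subst sum.swap)
      (simp add: sum_inner_matrix_vector_mult assms(7) power2_norm_eq_inner)
  also have "\<dots> = x \<bullet> (C_E K E (ket_bra \<psi>) \<theta> *v x)"
    by (simp add: inner_C_E_ket_bra[OF E'] b_def)
  finally show "0 \<le> x \<bullet> ((C_E K E (ket_bra \<psi>) \<theta> - fisher K E (ket_bra \<psi>) \<Omega> M \<theta>) *v x)"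
    by (simp add: matrix_vector_mult_diff_rdistrib inner_diff_right)
qed

end
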